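(* Let $\{T_n\}_{n\in\mathbb{Z}}$ and $\{S_n\}_{n\in\mathbb{Z}}$ be discrete linear evolution processes in a Banach space $X$ which admit nonuniform exponential dichotomies with projections $\{Q^{\mathcal{T}}_n\}$ and $\{Q^{\mathcal{S}}_n\}$, exponents $\alpha_{\mathcal{T}}$ and $\alpha_{\mathcal{S}}$ respectively, and the same bound $K(n)\le De^{\nu|n|}$. If $\nu<\min\{\alpha_{\mathcal{T}},\alpha_{\mathcal{S}}\}$ and $$\sup_{n\in\mathbb{Z}}\{K(n+1)\|T_n-S_n\|_{\mathcal{L}(X)}\}\le\epsilon,$$ then $$\sup_{n\in\mathbb{Z}}\{K(n)^{-1}\|Q^{\mathcal{T}}_n-Q^{\mathcal{S}}_n\|_{\mathcal{L}(X)}\}\le\frac{e^{-\alpha_{\mathcal{S}}}+e^{-\alpha_{\mathcal{T}}}}{1-e^{-(\alpha_{\mathcal{S}}+\alpha_{\mathcal{T}})}}\,\epsilon.$$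
   Context: A discrete (linear) evolution process in a Banach space $X$ is a family $\{S_{n,m}: n,m\in\mathbb{Z},\ n\ge m\}\subset\mathcal{L}(X)$ with $S_{n,n}=Id_X$ and $S_{n,m}S_{m,k}=S_{n,k}$ for $n\ge m\ge k$; equivalently it is given by one-step operators $S_n:=S_{n+1,n}$ via $S_{n,m}=S_{n-1}\cdots S_m$ ($n>m$). It admits a nonuniform exponential dichotomy if there is a family of bounded projections $\{Q_n\}_{n\in\mathbb{Z}}\subset\mathcal{L}(X)$ such that: (i) $Q_nS_{n,m}=S_{n,m}Q_m$ for $n\ge m$; (ii) for $n\ge m$, $S_{n,m}$ restricted to $R(Q_m)$ is an isomorphism onto $R(Q_n)$, and $S_{m,n}$ denotes its inverse; (iii) there are a function $K:\mathbb{Z}\to[1,\infty)$ (the bound) with $K(n)\le De^{\nu|n|}$ for some $D\ge1$, $\nu>0$, and $\alpha>0$ (the exponent) with $\|S_{n,m}(Id_X-Q_m)\|\le K(m)e^{-\alpha(n-m)}$ for $n\ge m$ and $\|S_{n,m}Q_m\|\le K(m)e^{\alpha(n-m)}$ for $n\le m$. *)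

theory Defs
  imports "HOL-Analysis.Analysis"
begin

text \<open>Discrete evolution process generated by one-step operators T n = S_{n+1,n}.
  evol_aux T m k = T (m+k-1) \<circ> ... \<circ> T m, i.e. S_{m+k,m}.\<close>
primrec evol_aux :: "(int \<Rightarrow> ('a::real_normed_vector \<Rightarrow>\<^sub>L 'a)) \<Rightarrow> int \<Rightarrow> nat \<Rightarrow> ('a \<Rightarrow>\<^sub>L 'a)" where
  "evol_aux T m 0 = id_blinfun"
| "evol_aux T m (Suc k) = T (m + int k) o\<^sub>L evol_aux T m k"

text \<open>evol T n m = S_{n,m} for n \<ge> m (identity when n \<le> m).\<close>
definition evol :: "(int \<Rightarrow> ('a::real_normed_vector \<Rightarrow>\<^sub>L 'a)) \<Rightarrow> int \<Rightarrow> int \<Rightarrow> ('a \<Rightarrow>\<^sub>L 'a)" where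
  "evol T n m = evol_aux T m (nat (n - m))"

text \<open>The growth condition K n \<le> D e^{\<nu>|n|} is required with
  the given D \<ge> 1, \<nu> > 0. For n \<le> m, the backward operator S_{n,m} Q_m maps x to the
  unique y \<in> R(Q_n) with S_{m,n} y = Q_m x; its operator-norm bound is stated pointwise.\<close>
definition nonuniform_dichotomy ::
  "(int \<Rightarrow> ('a::banach \<Rightarrow>\<^sub>L 'a)) \<Rightarrow> (int \<Rightarrow> ('a \<Rightarrow>\<^sub>L 'a)) \<Rightarrow> (int \<Rightarrow> real) \<Rightarrow> real \<Rightarrow> real \<Rightarrow> real \<Rightarrow> bool" where
  "nonuniform_dichotomy T Q K \<alpha> D \<nu> \<longleftrightarrow>
     (\<forall>n. Q n o\<^sub>L Q n = Q n) \<and>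
     (\<forall>n m. m \<le> n \<longrightarrow> Q n o\<^sub>L evol T n m = evol T n m o\<^sub>L Q m) \<and>
     (\<forall>n m. m \<le> n \<longrightarrow> bij_betw (blinfun_apply (evol T n m)) (range (blinfun_apply (Q m))) (range (blinfun_apply (Q n)))) \<and>
     D \<ge> 1 \<and> \<nu> > 0 \<and> \<alpha> > 0 \<and>
     (\<forall>n. 1 \<le> K n \<and> K n \<le> D * exp (\<nu> * \<bar>real_of_int n\<bar>)) \<and>
     (\<forall>n m. m \<le> n \<longrightarrow> norm (evol T n m o\<^sub>L (id_blinfun - Q m)) \<le> K m * exp (- \<alpha> * real_of_int (n - m))) \<and>
     (\<forall>n m x y. n \<le> m \<longrightarrow> y \<in> range (blinfun_apply (Q n)) \<longrightarrow> evol T m n y = Q m x \<longrightarrow>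
        norm y \<le> K m * exp (\<alpha> * real_of_int (n - m)) * norm x)"

end

theory Submission
  imports Defs
begin

text \<open>Write \<open>Q\<^sup>T\<^sub>n - Q\<^sup>S\<^sub>n = Q\<^sup>T\<^sub>n (I - Q\<^sup>S\<^sub>n) - (I - Q\<^sup>T\<^sub>n) Q\<^sup>S\<^sub>n\<close> and bound both terms by
  telescoping. For the second, let \<open>y\<^sub>k\<close> (\<open>k \<le> n\<close>) be the backward \<open>S\<close>-orbit of \<open>Q\<^sup>S\<^sub>n x\<close> inside
  the ranges of \<open>Q\<^sup>S\<close> and compare the vectors \<open>T\<^sub>n\<^sub>,\<^sub>k (I - Q\<^sup>T\<^sub>k) y\<^sub>k\<close>: consecutive ones differ
  only through the one-step defect \<open>(T\<^sub>k - S\<^sub>k) y\<^sub>k\<close>, which the hypothesis controls at the price of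
  \<open>K(k+1)\<close>, and the two dichotomy estimates give it the weight \<open>e\<^sup>-\<^sup>\<alpha>\<^sup>S (e\<^sup>-\<^sup>\<alpha>\<^sup>S\<^sup>-\<^sup>\<alpha>\<^sup>T)\<^sup>i\<close>
  at distance \<open>i = n - k - 1\<close>. For the first term use the forward \<open>S\<close>-orbit of
  \<open>(I - Q\<^sup>S\<^sub>n) x\<close> and its backward \<open>T\<close>-preimages in the range of \<open>Q\<^sup>T\<^sub>n\<close>. Both telescopes
  converge because \<open>K\<close> grows only like \<open>e\<^sup>\<nu>\<^sup>|\<^sup>k\<^sup>|\<close> and \<open>\<nu> < \<alpha>\<^sub>S + \<alpha>\<^sub>T\<close>; summing the two
  geometric series gives the constant.\<close>

lemma evol_aux_add: "evol_aux T m (a + b) x = evol_aux T (m + int a) b (evol_aux T m a x)"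
  by (induction b) (simp_all add: add.assoc)

lemma evol_trans:
  assumes "k \<le> m" "m \<le> n"
  shows "evol T n k x = evol T n m (evol T m k x)"
proof -
  have "nat (n - k) = nat (m - k) + nat (n - m)" "k + int (nat (m - k)) = m"
    using assms by auto
  then show ?thesis unfolding evol_def by (simp add: evol_aux_add)
qed

lemma evol_refl [simp]: "evol T n n = id_blinfun"
  by (simp add: evol_def)

lemma evol_Suc [simp]: "evol T (k + 1) k = T k"
  by (simp add: evol_def) (rule blinfun_eqI, simp)

lemma evol_split_first: "k < n \<Longrightarrow> evol T n k x = evol T n (k + 1) (T k x)"
  using evol_trans[of k "k + 1" n T x] by simp

lemma evol_split_last: "n \<le> k \<Longrightarrow> evol T (k + 1) n x = T k (evol T k n x)"
  using evol_trans[of n k "k + 1" T x] by simp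

lemma norm_le_of_telescoping_geometric:
  fixes u :: "nat \<Rightarrow> 'a::real_normed_vector"
  assumes lim: "u \<longlonglongrightarrow> 0"
    and step: "\<And>i. norm (u (Suc i) - u i) \<le> c * r ^ i"
    and r: "0 \<le> r" "r < 1"
  shows "norm (u 0) \<le> c / (1 - r)"
proof -
  have c: "0 \<le> c" using order_trans[OF norm_ge_zero step[of 0]] by simp
  have le: "norm (u 0) \<le> norm (u N) + c / (1 - r)" for N
  proof -
    have "u 0 = u N - (\<Sum>i<N. u (Suc i) - u i)"
      by (simp add: sum_lessThan_telescope)
    then have "norm (u 0) \<le> norm (u N) + (\<Sum>i<N. norm (u (Suc i) - u i))"
      by (metis norm_triangle_ineq4 norm_sum order_trans add_left_mono)
    also have "(\<Sum>i<N. norm (u (Suc i) - u i)) \<le> (\<Sum>i<N. c * r ^ i)"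
      by (intro sum_mono step)
    also have "\<dots> = c * (1 - r ^ N) / (1 - r)"
      using r by (simp add: sum_distrib_left[symmetric] sum_gp_strict)
    also have "\<dots> \<le> c / (1 - r)"
      using r c by (intro divide_right_mono) (auto simp: mult_left_le)
    finally show ?thesis by simp
  qed
  have "(\<lambda>N. norm (u N) + c / (1 - r)) \<longlonglongrightarrow> 0 + c / (1 - r)"
    by (intro tendsto_intros tendsto_norm_zero lim)
  then have "(\<lambda>N. norm (u N) + c / (1 - r)) \<longlonglongrightarrow> c / (1 - r)"
    by simp
  then show ?thesis
    by (rule LIMSEQ_le_const) (use le in auto)
qed

lemma exp_geometric:
  "exp (- a * real i) * exp (- b * real (Suc i)) = exp (- b) * exp (- (b + a)) ^ i"
  by (simp add: exp_of_nat_mult[symmetric] exp_add[symmetric] algebra_simps)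

locale dichotomic_process =
  fixes T Q :: "int \<Rightarrow> ('a::banach \<Rightarrow>\<^sub>L 'a)" and K :: "int \<Rightarrow> real" and \<alpha> D \<nu> :: real
  assumes dichotomy: "nonuniform_dichotomy T Q K \<alpha> D \<nu>"
begin

lemma projection_idem: "Q k (Q k v) = Q k v"
  using dichotomy unfolding nonuniform_dichotomy_def by (metis blinfun_apply_blinfun_compose)

lemma projection_commute: "m \<le> n \<Longrightarrow> Q n (evol T n m v) = evol T n m (Q m v)"
  using dichotomy unfolding nonuniform_dichotomy_def by (metis blinfun_apply_blinfun_compose)

lemma evol_bij_betw_ranges:
  "m \<le> n \<Longrightarrow> bij_betw (evol T n m) (range (Q m)) (range (Q n))"
  using dichotomy unfolding nonuniform_dichotomy_def by blast

lemma exponent_pos: "0 < \<alpha>"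
  using dichotomy unfolding nonuniform_dichotomy_def by auto

lemma bound_ge_one: "1 \<le> K n"
  using dichotomy unfolding nonuniform_dichotomy_def by auto

lemma stable_decay:
  assumes "m \<le> n"
  shows "norm (evol T n m (v - Q m v)) \<le> K m * exp (- \<alpha> * real_of_int (n - m)) * norm v"
proof -
  have "evol T n m (v - Q m v) = (evol T n m o\<^sub>L (id_blinfun - Q m)) v"
    by (simp add: blinfun.diff_left)
  also have "norm \<dots> \<le> norm (evol T n m o\<^sub>L (id_blinfun - Q m)) * norm v"
    by (rule norm_blinfun)
  also have "\<dots> \<le> K m * exp (- \<alpha> * real_of_int (n - m)) * norm v"
    using dichotomy assms unfolding nonuniform_dichotomy_def by (intro mult_right_mono) auto
  finally show ?thesis .
qed

lemma unstable_backward_decay: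
  assumes "n \<le> m" "Q n y = y" "evol T m n y = Q m x"
  shows "norm y \<le> K m * exp (\<alpha> * real_of_int (n - m)) * norm x"
proof -
  have "y \<in> range (Q n)" by (metis rangeI assms(2))
  then show ?thesis using dichotomy assms unfolding nonuniform_dichotomy_def by blast
qed

lemma bound_times_exp_tendsto_zero:
  assumes "\<nu> < \<beta>" and dist: "\<And>N. \<bar>k N - n\<bar> \<le> int N"
  shows "(\<lambda>N. K (k N) * exp (- \<beta> * real N)) \<longlonglongrightarrow> 0"
proof (rule Lim_null_comparison)
  have D: "0 \<le> D" and \<nu>: "0 < \<nu>" and growth: "\<And>k. K k \<le> D * exp (\<nu> * \<bar>real_of_int k\<bar>)"
    using dichotomy unfolding nonuniform_dichotomy_def by auto
  show "\<forall>\<^sub>F N in sequentially.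
      norm (K (k N) * exp (- \<beta> * real N)) \<le> D * exp (\<nu> * \<bar>real_of_int n\<bar>) * exp (\<nu> - \<beta>) ^ N"
  proof (intro always_eventually allI)
    fix N
    have "\<bar>real_of_int (k N)\<bar> \<le> \<bar>real_of_int n\<bar> + real N"
      using dist[of N] by linarith
    then have "\<nu> * \<bar>real_of_int (k N)\<bar> \<le> \<nu> * \<bar>real_of_int n\<bar> + \<nu> * real N"
      using \<nu> by (simp add: distrib_left[symmetric])
    then have "exp (\<nu> * \<bar>real_of_int (k N)\<bar>) \<le> exp (\<nu> * \<bar>real_of_int n\<bar>) * exp (\<nu> * real N)"
      by (simp add: exp_add[symmetric])
    then have "K (k N) \<le> D * exp (\<nu> * \<bar>real_of_int n\<bar>) * exp (\<nu> * real N)"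
      using growth[of "k N"] D by (smt (verit) mult_left_mono mult.assoc)
    then have "K (k N) * exp (- \<beta> * real N)
        \<le> D * exp (\<nu> * \<bar>real_of_int n\<bar>) * (exp (\<nu> * real N) * exp (- \<beta> * real N))"
      by (simp add: mult.assoc)
    also have "exp (\<nu> * real N) * exp (- \<beta> * real N) = exp (\<nu> - \<beta>) ^ N"
      by (simp add: exp_of_nat_mult[symmetric] exp_add[symmetric] algebra_simps)
    finally show "norm (K (k N) * exp (- \<beta> * real N)) \<le> D * exp (\<nu> * \<bar>real_of_int n\<bar>) * exp (\<nu> - \<beta>) ^ N"
      using bound_ge_one[of "k N"] by simp
  qed
  show "(\<lambda>N. D * exp (\<nu> * \<bar>real_of_int n\<bar>) * exp (\<nu> - \<beta>) ^ N) \<longlonglongrightarrow> 0"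
    using assms(1) by (intro tendsto_mult_right_zero LIMSEQ_power_zero) auto
qed

text \<open>The paper's \<open>S\<^sub>k\<^sub>,\<^sub>n Q\<^sub>n\<close> for \<open>k \<le> n\<close>: the preimage of a vector of \<open>R(Q\<^sub>n)\<close> in \<open>R(Q\<^sub>k)\<close>.\<close>
definition backward :: "int \<Rightarrow> int \<Rightarrow> 'a \<Rightarrow> 'a" where
  "backward n k v = inv_into (range (Q k)) (evol T n k) v"

lemma backward_in_range_evol_backward:
  assumes "k \<le> n"
  shows "Q k (backward n k (Q n x)) = backward n k (Q n x)"
    and "evol T n k (backward n k (Q n x)) = Q n x"
proof -
  have "Q n x \<in> evol T n k ` range (Q k)"
    using evol_bij_betw_ranges[OF assms] by (simp add: bij_betw_def)
  then have "backward n k (Q n x) \<in> range (Q k)" "evol T n k (backward n k (Q n x)) = Q n x"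
    unfolding backward_def by (auto intro: inv_into_into f_inv_into_f)
  then show "Q k (backward n k (Q n x)) = backward n k (Q n x)"
      and "evol T n k (backward n k (Q n x)) = Q n x"
    using projection_idem by auto
qed

lemma norm_backward_le:
  "k \<le> n \<Longrightarrow> norm (backward n k (Q n x)) \<le> K n * exp (\<alpha> * real_of_int (k - n)) * norm x"
  using unstable_backward_decay backward_in_range_evol_backward by blast

lemma backward_step:
  assumes "k < n"
  shows "backward n (k + 1) (Q n x) = T k (backward n k (Q n x))"
proof -
  let ?y = "backward n k (Q n x)"
  have "Q (k + 1) (T k ?y) = T k ?y"
    using projection_commute[of k "k + 1" ?y] backward_in_range_evol_backward(1)[of k n x] assms
    by simp
  then have "T k ?y \<in> range (Q (k + 1))" by (metis rangeI)
  moreover have "backward n (k + 1) (Q n x) \<in> range (Q (k + 1))"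
    using backward_in_range_evol_backward(1)[of "k + 1" n x] assms by (metis rangeI zless_imp_add1_zle)
  moreover have "evol T n (k + 1) (backward n (k + 1) (Q n x)) = evol T n (k + 1) (T k ?y)"
  proof -
    have "evol T n (k + 1) (backward n (k + 1) (Q n x)) = Q n x"
      using backward_in_range_evol_backward(2)[of "k + 1" n x] assms by simp
    also have "\<dots> = evol T n k ?y"
      using backward_in_range_evol_backward(2)[of k n x] assms by simp
    also have "\<dots> = evol T n (k + 1) (T k ?y)"
      by (rule evol_split_first[OF assms])
    finally show ?thesis .
  qed
  moreover have "inj_on (evol T n (k + 1)) (range (Q (k + 1)))"
    using evol_bij_betw_ranges[of "k + 1" n] assms by (simp add: bij_betw_def)
  ultimately show ?thesis by (auto dest: inj_onD)
qed

lemma norm_stable_step_diff: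
  assumes "k < n"
  shows "norm (evol T n k (v - Q k v) - evol T n (k + 1) (w - Q (k + 1) w))
    \<le> K (k + 1) * exp (- \<alpha> * real_of_int (n - (k + 1))) * norm (T k v - w)"
proof -
  have "evol T n k (v - Q k v) - evol T n (k + 1) (w - Q (k + 1) w)
      = evol T n (k + 1) ((T k v - w) - Q (k + 1) (T k v - w))"
    using evol_split_first[OF assms, of T] projection_commute[of k "k + 1" v]
    by (simp add: blinfun.diff_right)
  then show ?thesis using stable_decay[of "k + 1" n] assms by simp
qed

lemma norm_backward_step_diff:
  assumes "n \<le> k"
  shows "norm (backward (k + 1) n (Q (k + 1) y) - backward k n (Q k x))
    \<le> K (k + 1) * exp (\<alpha> * real_of_int (n - (k + 1))) * norm (y - T k x)"
proof (rule unstable_backward_decay)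
  show "Q n (backward (k + 1) n (Q (k + 1) y) - backward k n (Q k x))
      = backward (k + 1) n (Q (k + 1) y) - backward k n (Q k x)"
    using backward_in_range_evol_backward(1) assms by (simp add: blinfun.diff_right)
  have "evol T (k + 1) n (backward (k + 1) n (Q (k + 1) y)) = Q (k + 1) y"
    using backward_in_range_evol_backward(2)[of n "k + 1" y] assms by simp
  moreover have "evol T (k + 1) n (backward k n (Q k x)) = Q (k + 1) (T k x)"
    using backward_in_range_evol_backward(2)[of n k x] evol_split_last[OF assms, of T]
      projection_commute[of k "k + 1" x]
    by (simp add: assms)
  ultimately show "evol T (k + 1) n (backward (k + 1) n (Q (k + 1) y) - backward k n (Q k x))
      = Q (k + 1) (y - T k x)"
    by (simp add: blinfun.diff_right)
qed (use assms in simp)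

end

locale dichotomic_pair =
  T: dichotomic_process T QT K \<alpha>T D \<nu> + S: dichotomic_process S QS K \<alpha>S D \<nu>
  for T QT S QS :: "int \<Rightarrow> ('a::banach \<Rightarrow>\<^sub>L 'a)" and K \<alpha>T D \<nu> \<alpha>S +
  fixes \<epsilon> :: real
  assumes growth_lt_exponents: "\<nu> < \<alpha>T + \<alpha>S"
    and perturbation_small: "\<And>n. K (n + 1) * norm (T n - S n) \<le> \<epsilon>"
begin

lemma perturbation_apply: "K (k + 1) * norm (T k v - S k v) \<le> \<epsilon> * norm v"
proof -
  have "norm (T k v - S k v) \<le> norm (T k - S k) * norm v"
    by (metis blinfun.diff_left norm_blinfun)
  then have "K (k + 1) * norm (T k v - S k v) \<le> K (k + 1) * norm (T k - S k) * norm v"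
    using T.bound_ge_one[of "k + 1"] by (simp add: mult.assoc)
  also have "\<dots> \<le> \<epsilon> * norm v"
    by (intro mult_right_mono perturbation_small) simp
  finally show ?thesis .
qed

lemma eps_nonneg: "0 \<le> \<epsilon>"
  using perturbation_small[of 0] T.bound_ge_one[of 1] by (smt (verit) mult_nonneg_nonneg norm_ge_zero)

lemma ratio_bounds: "0 \<le> exp (- (\<alpha>S + \<alpha>T))" "exp (- (\<alpha>S + \<alpha>T)) < 1"
  using T.exponent_pos S.exponent_pos by auto

lemma sequence_tendsto_zero_of_dichotomy_bound:
  assumes dist: "\<And>N. \<bar>k N - n\<bar> \<le> int N"
    and bound: "\<And>N. norm (u N) \<le> K (k N) * exp (- \<alpha>T * real N) * (K n * exp (- \<alpha>S * real N) * c)"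
  shows "u \<longlonglongrightarrow> 0"
proof (rule Lim_null_comparison)
  show "\<forall>\<^sub>F N in sequentially. norm (u N) \<le> K n * c * (K (k N) * exp (- (\<alpha>T + \<alpha>S) * real N))"
    using bound by (intro always_eventually) (simp add: exp_add[symmetric] algebra_simps)
  show "(\<lambda>N. K n * c * (K (k N) * exp (- (\<alpha>T + \<alpha>S) * real N))) \<longlonglongrightarrow> 0"
    using T.bound_times_exp_tendsto_zero[OF growth_lt_exponents dist]
    by (rule tendsto_mult_right_zero)
qed

definition stable_telescope :: "int \<Rightarrow> 'a \<Rightarrow> nat \<Rightarrow> 'a" where
  "stable_telescope n x i =
    (let k = n - int i; y = S.backward n k (QS n x) in evol T n k (y - QT k y))"

lemma stable_telescope_0: "stable_telescope n x 0 = QS n x - QT n (QS n x)"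
  using S.backward_in_range_evol_backward(2)[of n n x] by (simp add: stable_telescope_def Let_def)

lemma norm_stable_telescope_diff_le:
  "norm (stable_telescope n x (Suc i) - stable_telescope n x i)
    \<le> \<epsilon> * K n * norm x * exp (- \<alpha>S) * exp (- (\<alpha>S + \<alpha>T)) ^ i"
proof -
  define k where "k = n - int i - 1"
  define y where "y k = S.backward n k (QS n x)" for k
  have k: "n - int (Suc i) = k" "n - int i = k + 1" "k < n"
    and dist: "real_of_int (k - n) = - real (Suc i)" "real_of_int (n - (k + 1)) = real i"
    unfolding k_def by auto
  have "norm (y k) \<le> K n * exp (- \<alpha>S * real (Suc i)) * norm x"
    using S.norm_backward_le[OF less_imp_le[OF k(3)], of x] unfolding y_def dist by (simp add: algebra_simps)
  then have defect: "K (k + 1) * norm (T k (y k) - S k (y k)) \<le> \<epsilon> * (K n * exp (- \<alpha>S * real (Suc i)) * norm x)"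
    using perturbation_apply[of k "y k"] eps_nonneg by (meson mult_left_mono order_trans)
  have "norm (stable_telescope n x (Suc i) - stable_telescope n x i)
      \<le> exp (- \<alpha>T * real i) * (K (k + 1) * norm (T k (y k) - S k (y k)))"
    using T.norm_stable_step_diff[OF k(3), of "y k" "y (k + 1)"] S.backward_step[OF k(3)]
    unfolding stable_telescope_def Let_def y_def k dist by (simp add: algebra_simps)
  also have "\<dots> \<le> \<epsilon> * K n * norm x * (exp (- \<alpha>T * real i) * exp (- \<alpha>S * real (Suc i)))"
    using mult_left_mono[OF defect, of "exp (- \<alpha>T * real i)"] by (simp add: mult_ac)
  also have "\<dots> = \<epsilon> * K n * norm x * (exp (- \<alpha>S) * exp (- (\<alpha>S + \<alpha>T)) ^ i)"
    by (simp only: exp_geometric)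
  finally show ?thesis by (simp add: mult.assoc)
qed

lemma stable_telescope_tendsto_zero: "stable_telescope n x \<longlonglongrightarrow> 0"
proof (rule sequence_tendsto_zero_of_dichotomy_bound)
  fix N
  show "\<bar>(n - int N) - n\<bar> \<le> int N" by simp
  let ?y = "S.backward n (n - int N) (QS n x)"
  have "norm (stable_telescope n x N) \<le> K (n - int N) * exp (- \<alpha>T * real N) * norm ?y"
    using T.stable_decay[of "n - int N" n] unfolding stable_telescope_def Let_def by simp
  also have "\<dots> \<le> K (n - int N) * exp (- \<alpha>T * real N) * (K n * exp (- \<alpha>S * real N) * norm x)"
    using S.norm_backward_le[of "n - int N" n x] T.bound_ge_one[of "n - int N"]
    by (intro mult_left_mono) auto
  finally show "norm (stable_telescope n x N)
      \<le> K (n - int N) * exp (- \<alpha>T * real N) * (K n * exp (- \<alpha>S * real N) * norm x)" .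
qed

lemma norm_stable_part_le:
  "norm (QS n x - QT n (QS n x)) \<le> \<epsilon> * K n * norm x * exp (- \<alpha>S) / (1 - exp (- (\<alpha>S + \<alpha>T)))"
  using norm_le_of_telescoping_geometric[OF stable_telescope_tendsto_zero
      norm_stable_telescope_diff_le ratio_bounds]
  by (simp add: stable_telescope_0)

definition unstable_telescope :: "int \<Rightarrow> 'a \<Rightarrow> nat \<Rightarrow> 'a" where
  "unstable_telescope n x i = (let k = n + int i in T.backward k n (QT k (evol S k n (x - QS n x))))"

lemma unstable_telescope_0: "unstable_telescope n x 0 = QT n (x - QS n x)"
  using T.backward_in_range_evol_backward(2)[of n n "x - QS n x"] by (simp add: unstable_telescope_def Let_def)

lemma norm_unstable_telescope_diff_le:
  "norm (unstable_telescope n x (Suc i) - unstable_telescope n x i)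
    \<le> \<epsilon> * K n * norm x * exp (- \<alpha>T) * exp (- (\<alpha>S + \<alpha>T)) ^ i"
proof -
  define k where "k = n + int i"
  define z where "z k = evol S k n (x - QS n x)" for k
  have k: "n + int (Suc i) = k + 1" "n + int i = k" "n \<le> k"
    and dist: "real_of_int (k - n) = real i" "real_of_int (n - (k + 1)) = - real (Suc i)"
    unfolding k_def by auto
  have "norm (z k) \<le> K n * exp (- \<alpha>S * real i) * norm x"
    using S.stable_decay[OF k(3), of x] unfolding z_def dist by simp
  then have defect: "K (k + 1) * norm (T k (z k) - S k (z k)) \<le> \<epsilon> * (K n * exp (- \<alpha>S * real i) * norm x)"
    using perturbation_apply[of k "z k"] eps_nonneg by (meson mult_left_mono order_trans)
  have "norm (unstable_telescope n x (Suc i) - unstable_telescope n x i)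
      \<le> exp (- \<alpha>T * real (Suc i)) * (K (k + 1) * norm (T k (z k) - S k (z k)))"
    using T.norm_backward_step_diff[OF k(3), of "z (k + 1)" "z k"] evol_split_last[OF k(3), of S]
    unfolding unstable_telescope_def Let_def z_def k dist by (simp add: norm_minus_commute algebra_simps)
  also have "\<dots> \<le> \<epsilon> * K n * norm x * (exp (- \<alpha>S * real i) * exp (- \<alpha>T * real (Suc i)))"
    using mult_left_mono[OF defect, of "exp (- \<alpha>T * real (Suc i))"] by (simp add: mult_ac)
  also have "\<dots> = \<epsilon> * K n * norm x * (exp (- \<alpha>T) * exp (- (\<alpha>S + \<alpha>T)) ^ i)"
    by (simp only: exp_geometric add.commute[of \<alpha>T \<alpha>S])
  finally show ?thesis by (simp add: mult.assoc)
qed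

lemma unstable_telescope_tendsto_zero: "unstable_telescope n x \<longlonglongrightarrow> 0"
proof (rule sequence_tendsto_zero_of_dichotomy_bound)
  fix N
  show "\<bar>(n + int N) - n\<bar> \<le> int N" by simp
  let ?z = "evol S (n + int N) n (x - QS n x)"
  have "norm (unstable_telescope n x N) \<le> K (n + int N) * exp (- \<alpha>T * real N) * norm ?z"
    using T.norm_backward_le[of n "n + int N" ?z] unfolding unstable_telescope_def Let_def by simp
  also have "\<dots> \<le> K (n + int N) * exp (- \<alpha>T * real N) * (K n * exp (- \<alpha>S * real N) * norm x)"
    using S.stable_decay[of n "n + int N" x] T.bound_ge_one[of "n + int N"]
    by (intro mult_left_mono) auto
  finally show "norm (unstable_telescope n x N)
      \<le> K (n + int N) * exp (- \<alpha>T * real N) * (K n * exp (- \<alpha>S * real N) * norm x)" .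
qed

lemma norm_unstable_part_le:
  "norm (QT n (x - QS n x)) \<le> \<epsilon> * K n * norm x * exp (- \<alpha>T) / (1 - exp (- (\<alpha>S + \<alpha>T)))"
  using norm_le_of_telescoping_geometric[OF unstable_telescope_tendsto_zero
      norm_unstable_telescope_diff_le ratio_bounds]
  by (simp add: unstable_telescope_0)

lemma norm_projection_diff_le:
  "norm (QT n - QS n) \<le> K n * ((exp (- \<alpha>S) + exp (- \<alpha>T)) / (1 - exp (- (\<alpha>S + \<alpha>T))) * \<epsilon>)"
proof (rule norm_blinfun_bound)
  show "0 \<le> K n * ((exp (- \<alpha>S) + exp (- \<alpha>T)) / (1 - exp (- (\<alpha>S + \<alpha>T))) * \<epsilon>)"
    using T.bound_ge_one[of n] ratio_bounds eps_nonneg by simp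
  fix x
  have "(QT n - QS n) x = QT n (x - QS n x) - (QS n x - QT n (QS n x))"
    by (simp add: blinfun.diff_left blinfun.diff_right)
  then have "norm ((QT n - QS n) x) \<le> norm (QT n (x - QS n x)) + norm (QS n x - QT n (QS n x))"
    by (metis norm_triangle_ineq4)
  also have "\<dots> \<le> \<epsilon> * K n * norm x * exp (- \<alpha>T) / (1 - exp (- (\<alpha>S + \<alpha>T)))
      + \<epsilon> * K n * norm x * exp (- \<alpha>S) / (1 - exp (- (\<alpha>S + \<alpha>T)))"
    by (intro add_mono norm_unstable_part_le norm_stable_part_le)
  also have "\<dots> = K n * ((exp (- \<alpha>S) + exp (- \<alpha>T)) / (1 - exp (- (\<alpha>S + \<alpha>T))) * \<epsilon>) * norm x"
    by (simp add: add_divide_distrib algebra_simps)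
  finally show "norm ((QT n - QS n) x)
      \<le> K n * ((exp (- \<alpha>S) + exp (- \<alpha>T)) / (1 - exp (- (\<alpha>S + \<alpha>T))) * \<epsilon>) * norm x" .
qed

end

theorem mainTheorem2:
  fixes T S QT QS :: "int \<Rightarrow> ('a::banach \<Rightarrow>\<^sub>L 'a)"
    and K :: "int \<Rightarrow> real" and \<alpha>T \<alpha>S D \<nu> \<epsilon> :: real
  assumes "nonuniform_dichotomy T QT K \<alpha>T D \<nu>"
    and "nonuniform_dichotomy S QS K \<alpha>S D \<nu>"
    and "\<nu> < min \<alpha>T \<alpha>S"
    and "\<forall>n. K (n + 1) * norm (T n - S n) \<le> \<epsilon>"
  shows "\<forall>n. inverse (K n) * norm (QT n - QS n)
           \<le> (exp (- \<alpha>S) + exp (- \<alpha>T)) / (1 - exp (- (\<alpha>S + \<alpha>T))) * \<epsilon>"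
proof
  fix n
  interpret dichotomic_pair T QT S QS K \<alpha>T D \<nu> \<alpha>S \<epsilon>
  proof (unfold_locales)
    show "nonuniform_dichotomy T QT K \<alpha>T D \<nu>" "nonuniform_dichotomy S QS K \<alpha>S D \<nu>"
      by (fact assms(1), fact assms(2))
    show "\<nu> < \<alpha>T + \<alpha>S"
      using assms(2,3) unfolding nonuniform_dichotomy_def by linarith
  qed (use assms(4) in blast)
  show "inverse (K n) * norm (QT n - QS n)
      \<le> (exp (- \<alpha>S) + exp (- \<alpha>T)) / (1 - exp (- (\<alpha>S + \<alpha>T))) * \<epsilon>"
    using norm_projection_diff_le[of n] T.bound_ge_one[of n]
    by (simp add: inverse_eq_divide pos_divide_le_eq mult.commute)
qed

end
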